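(* (a) Let $X$ be an irreducible subvariety of $\mathrm{Sym}_2(\mathbb C^m)$. Then $\mathrm{MLD}_{\det}(X)$ equals the usual Gaussian ML degree of $X$, i.e. the number of complex critical points of $K\mapsto \log\det(K)-\mathrm{tr}(KS)$ on $X^{\mathrm{sm}}\setminus V(\det)$ for a general complex symmetric matrix $S\in\mathrm{Sym}_2(\mathbb C^m)$. (b) Conversely, let $\mathcal L$ be a finite-dimensional complex vector space, $X\subseteq\mathcal L$ an irreducible affine variety and $F$ a polynomial on $\mathcal L$. Then there exist an integer $m$ and an injective affine-linear map $\mathcal A:\mathcal L\to\mathrm{Sym}_2(\mathbb C^m)$ such that $\mathrm{MLD}_F(X)=\mathrm{MLD}_{\det}(\mathcal A(X))$.
   Context: Let $\mathcal L$ be a finite-dimensional complex vector space with dual $\mathcal L^*$. For a polynomial $F$ on $\mathcal L$, $\mathbf u\in\mathcal L^*$ and $p\in\mathcal L\setminus V(F)$, the (Gaussian) log-likelihood is $\ell_{F,\mathbf u}(p)=\log F(p)-\mathbf u(p)$; its gradient $\nabla_p\ell_{F,\mathbf u}=\nabla_pF/F(p)-\mathbf u\in\mathcal L^*$ does not depend on the branch of the logarithm. For an irreducible affine variety $Y\subseteq\mathcal L$, the ML degree $\mathrm{MLD}_F(Y)$ is the number of points $p\in Y^{\mathrm{sm}}\setminus V(F)$ ($Y^{\mathrm{sm}}$ the smooth locus) with $T_pY\subseteq\ker(\nabla_p\ell_{F,\mathbf u})$, for general $\mathbf u\in\mathcal L^*$. Here $\det$ denotes the determinant polynomial on $\mathrm{Sym}_2(\mathbb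 C^m)$, the space of complex symmetric $m\times m$ matrices. *)

theory Defs
  imports "HOL-Analysis.Derivative" "Jordan_Normal_Form.Determinant"
begin

text \<open>A finite-dimensional complex vector space is modelled as the coordinate space
  with a finite index set I: points are maps x :: 'i => complex vanishing outside I.\<close>

definition cspace :: "'i set \<Rightarrow> ('i \<Rightarrow> complex) set" where
  "cspace I = {x. \<forall>i. i \<notin> I \<longrightarrow> x i = 0}"

inductive_set polyfun :: "'i set \<Rightarrow> (('i \<Rightarrow> complex) \<Rightarrow> complex) set" for I where
  const: "(\<lambda>x. c) \<in> polyfun I"
| coord: "i \<in> I \<Longrightarrow> (\<lambda>x. x i) \<in> polyfun I"
| add: "f \<in> polyfun I \<Longrightarrow> g \<in> polyfun I \<Longrightarrow> (\<lambda>x. f x + g x) \<in> polyfun I"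
| mult: "f \<in> polyfun I \<Longrightarrow> g \<in> polyfun I \<Longrightarrow> (\<lambda>x. f x * g x) \<in> polyfun I"

definition zero_set :: "'i set \<Rightarrow> (('i \<Rightarrow> complex) \<Rightarrow> complex) set \<Rightarrow> ('i \<Rightarrow> complex) set" where
  "zero_set I P = {x \<in> cspace I. \<forall>f\<in>P. f x = 0}"

definition affine_variety :: "'i set \<Rightarrow> ('i \<Rightarrow> complex) set \<Rightarrow> bool" where
  "affine_variety I Y \<longleftrightarrow> (\<exists>P \<subseteq> polyfun I. Y = zero_set I P)"

definition irreducible_variety :: "'i set \<Rightarrow> ('i \<Rightarrow> complex) set \<Rightarrow> bool" where
  "irreducible_variety I Y \<longleftrightarrow> affine_variety I Y \<and> Y \<noteq> {} \<and>
     (\<forall>Z1 Z2. affine_variety I Z1 \<and> affine_variety I Z2 \<and> Y \<subseteq> Z1 \<union> Z2 \<longrightarrow> Y \<subseteq> Z1 \<or> Y \<subseteq> Z2)"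

definition vanishing_ideal :: "'i set \<Rightarrow> ('i \<Rightarrow> complex) set \<Rightarrow> (('i \<Rightarrow> complex) \<Rightarrow> complex) set" where
  "vanishing_ideal I Y = {f \<in> polyfun I. \<forall>x\<in>Y. f x = 0}"

definition dirderiv :: "(('i \<Rightarrow> complex) \<Rightarrow> complex) \<Rightarrow> ('i \<Rightarrow> complex) \<Rightarrow> ('i \<Rightarrow> complex) \<Rightarrow> complex" where
  "dirderiv f p v = deriv (\<lambda>t::complex. f (\<lambda>i. p i + t * v i)) 0"

definition tangent_space :: "'i set \<Rightarrow> ('i \<Rightarrow> complex) set \<Rightarrow> ('i \<Rightarrow> complex) \<Rightarrow> ('i \<Rightarrow> complex) set" where
  "tangent_space I Y p = {v \<in> cspace I. \<forall>f\<in>vanishing_ideal I Y. dirderiv f p v = 0}"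

definition cindep :: "('i \<Rightarrow> complex) set \<Rightarrow> bool" where
  "cindep S \<longleftrightarrow> finite S \<and>
     (\<forall>c. (\<forall>i. (\<Sum>v\<in>S. c v * v i) = 0) \<longrightarrow> (\<forall>v\<in>S. c v = 0))"

definition cdim :: "('i \<Rightarrow> complex) set \<Rightarrow> nat" where
  "cdim T = Sup {card S | S. S \<subseteq> T \<and> cindep S}"

definition var_dim :: "'i set \<Rightarrow> ('i \<Rightarrow> complex) set \<Rightarrow> nat" where
  "var_dim I Y = Sup {n. \<exists>Z :: nat \<Rightarrow> ('i \<Rightarrow> complex) set.
      (\<forall>k\<le>n. irreducible_variety I (Z k) \<and> Z k \<subseteq> Y) \<and> (\<forall>k<n. Z k \<subset> Z (Suc k))}"

definition smooth_locus :: "'i set \<Rightarrow> ('i \<Rightarrow> complex) set \<Rightarrow> ('i \<Rightarrow> complex) set" where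
  "smooth_locus I Y = {p \<in> Y. cdim (tangent_space I Y p) = var_dim I Y}"

definition general :: "'i set \<Rightarrow> (('i \<Rightarrow> complex) \<Rightarrow> bool) \<Rightarrow> bool" where
  "general I Q \<longleftrightarrow> (\<exists>Z. affine_variety I Z \<and> Z \<noteq> cspace I \<and> (\<forall>u\<in>cspace I - Z. Q u))"

text \<open>Linear functionals u in L^* are given by coefficient vectors u in cspace I,
  u(v) = sum over i in I of u i * v i. Critical points of the log-likelihood.\<close>
definition ml_crit :: "'i set \<Rightarrow> (('i \<Rightarrow> complex) \<Rightarrow> complex) \<Rightarrow> ('i \<Rightarrow> complex) set
     \<Rightarrow> ('i \<Rightarrow> complex) \<Rightarrow> ('i \<Rightarrow> complex) set" where
  "ml_crit I F Y u = {p \<in> smooth_locus I Y. F p \<noteq> 0 \<and>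
     (\<forall>v\<in>tangent_space I Y p. dirderiv F p v / F p - (\<Sum>i\<in>I. u i * v i) = 0)}"

definition MLD :: "'i set \<Rightarrow> (('i \<Rightarrow> complex) \<Rightarrow> complex) \<Rightarrow> ('i \<Rightarrow> complex) set \<Rightarrow> nat" where
  "MLD I F Y = (THE N. general I (\<lambda>u. finite (ml_crit I F Y u) \<and> card (ml_crit I F Y u) = N))"

text \<open>Sym_2(C^m): coordinates x (i,j) with i \<le> j < m.\<close>
definition symidx :: "nat \<Rightarrow> (nat \<times> nat) set" where
  "symidx m = {(i,j). i \<le> j \<and> j < m}"

definition symmat :: "nat \<Rightarrow> (nat \<times> nat \<Rightarrow> complex) \<Rightarrow> complex mat" where
  "symmat m x = mat m m (\<lambda>(i,j). x (min i j, max i j))"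

definition detF :: "nat \<Rightarrow> (nat \<times> nat \<Rightarrow> complex) \<Rightarrow> complex" where
  "detF m x = det (symmat m x)"

text \<open>Usual Gaussian ML degree: critical points of K \<mapsto> log det K - tr(K S), whose
  derivative in direction V is D det_K(V)/det K - tr(V S).\<close>
definition gauss_crit :: "nat \<Rightarrow> (nat \<times> nat \<Rightarrow> complex) set \<Rightarrow> (nat \<times> nat \<Rightarrow> complex)
     \<Rightarrow> (nat \<times> nat \<Rightarrow> complex) set" where
  "gauss_crit m X S = {K \<in> smooth_locus (symidx m) X. detF m K \<noteq> 0 \<and>
     (\<forall>V\<in>tangent_space (symidx m) X K.
        dirderiv (detF m) K V / detF m K
        - (\<Sum>i<m. \<Sum>j<m. symmat m V $$ (i,j) * symmat m S $$ (j,i)) = 0)}"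

definition gaussian_MLD :: "nat \<Rightarrow> (nat \<times> nat \<Rightarrow> complex) set \<Rightarrow> nat" where
  "gaussian_MLD m X = (THE N. general (symidx m)
      (\<lambda>S. finite (gauss_crit m X S) \<and> card (gauss_crit m X S) = N))"

end

theory Submission
  imports Defs
begin

text \<open>
  (a) The Gaussian score tr(VS) is the linear functional on Sym_2 whose coefficients in the
  coordinates V(i,j), i \<le> j, are S(i,i) and 2 S(i,j); this is an invertible linear change of the
  data, and such a change preserves statements about general data.

  (b) Every polynomial F can be written F(x) = b \<bullet> N(x)^-1 a with N(x) affine in x and of
  determinant 1 (induction over F). Bordering N(x) by a and b and adjoining a unitriangular block
  carrying the coordinates of x gives an affine square matrix B(x) with det B(x) = -F(x) that
  contains x. Then A(x) = [[0, B(x)], [B(x)^T, 0]] is an injective affine map into Sym_2 with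
  det (A x) = \<plusminus>F(x)^2, so log det \<circ> A = 2 log F + const. Hence the linear part of A identifies
  tangent spaces, A preserves dimension and smooth loci, and the critical points of the
  determinantal likelihood on A(X) for data w are the images of the critical points of the
  likelihood of F on X for the pulled back data, which is again general when w is.
\<close>

section \<open>Polynomial functions, directional derivatives and Zariski closed sets\<close>

lemma polyfun_sum:
  assumes "finite S" "\<And>s. s \<in> S \<Longrightarrow> f s \<in> polyfun I"
  shows "(\<lambda>x. \<Sum>s\<in>S. f s x) \<in> polyfun I"
  using assms by (induction S rule: finite_induct) (auto intro: polyfun.intros)

lemma polyfun_cmult: "f \<in> polyfun I \<Longrightarrow> (\<lambda>x. c * f x) \<in> polyfun I"
  by (rule polyfun.mult[OF polyfun.const])

lemma polyfun_diff: "f \<in> polyfun I \<Longrightarrow> g \<in> polyfun I \<Longrightarrow> (\<lambda>x. f x - g x) \<in> polyfun I"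
  using polyfun.add[OF _ polyfun_cmult, of f I g "-1"] by simp

lemma polyfun_comp:
  assumes "f \<in> polyfun J" "\<And>j. j \<in> J \<Longrightarrow> (\<lambda>x. G x j) \<in> polyfun I"
  shows "(\<lambda>x. f (G x)) \<in> polyfun I"
  using assms by (induction rule: polyfun.induct) (auto intro: polyfun.intros)

lemma dirderiv_cong:
  "(\<And>t. f (\<lambda>i. p i + t * v i) = g (\<lambda>i. p i + t * v i)) \<Longrightarrow> dirderiv f p v = dirderiv g p v"
  unfolding dirderiv_def by presburger

lemma dirderiv_affine_line:
  assumes "\<And>t. f (\<lambda>i. p i + t * v i) = f p + t * c"
  shows "dirderiv f p v = c"
proof -
  have "((\<lambda>t. f p + t * c) has_field_derivative c) (at 0)"
    by (auto intro!: derivative_eq_intros)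
  then show ?thesis unfolding dirderiv_def assms by (rule DERIV_imp_deriv)
qed

lemma affine_variety_subset: "affine_variety I Y \<Longrightarrow> Y \<subseteq> cspace I"
  unfolding affine_variety_def zero_set_def by auto

lemma affine_variety_vimage:
  assumes "\<And>x. x \<in> cspace I \<Longrightarrow> G x \<in> cspace J"
    and "\<And>j. j \<in> J \<Longrightarrow> (\<lambda>x. G x j) \<in> polyfun I"
    and "affine_variety J Z"
  shows "affine_variety I {x \<in> cspace I. G x \<in> Z}"
proof -
  obtain P where P: "P \<subseteq> polyfun J" "Z = zero_set J P"
    using assms(3) unfolding affine_variety_def by blast
  have "{x \<in> cspace I. G x \<in> Z} = zero_set I ((\<lambda>f x. f (G x)) ` P)"
    using assms(1) unfolding P(2) zero_set_def by auto
  moreover have "(\<lambda>f x. f (G x)) ` P \<subseteq> polyfun I"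
    using polyfun_comp assms(2) P(1) by blast
  ultimately show ?thesis unfolding affine_variety_def by blast
qed

lemma affine_variety_INT:
  assumes "\<And>k. k \<in> K \<Longrightarrow> affine_variety I {x \<in> cspace I. R k x}"
  shows "affine_variety I {x \<in> cspace I. \<forall>k\<in>K. R k x}"
proof -
  obtain P where P: "\<And>k. k \<in> K \<Longrightarrow> P k \<subseteq> polyfun I \<and> {x \<in> cspace I. R k x} = zero_set I (P k)"
    using assms unfolding affine_variety_def by metis
  have "{x \<in> cspace I. \<forall>k\<in>K. R k x} = zero_set I (\<Union>k\<in>K. P k)"
    using P unfolding zero_set_def by (auto simp: set_eq_iff) blast+
  moreover have "(\<Union>k\<in>K. P k) \<subseteq> polyfun I" using P by blast
  ultimately show ?thesis unfolding affine_variety_def by blast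
qed

section \<open>Generic data under polynomial reparametrisation\<close>

lemma general_comp_of_general:
  assumes T: "\<And>w. w \<in> cspace J \<Longrightarrow> T w \<in> cspace I"
    and T_poly: "\<And>i. i \<in> I \<Longrightarrow> (\<lambda>w. T w i) \<in> polyfun J"
    and T_surj: "cspace I \<subseteq> T ` cspace J"
    and "general I Q"
  shows "general J (\<lambda>w. Q (T w))"
proof -
  obtain Z where Z: "affine_variety I Z" "Z \<noteq> cspace I" "\<forall>u\<in>cspace I - Z. Q u"
    using \<open>general I Q\<close> unfolding general_def by blast
  have "affine_variety J {w \<in> cspace J. T w \<in> Z}"
    by (rule affine_variety_vimage[OF T T_poly Z(1)])
  moreover have "{w \<in> cspace J. T w \<in> Z} \<noteq> cspace J"
    using Z(2) affine_variety_subset[OF Z(1)] T_surj by blast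
  ultimately show ?thesis
    unfolding general_def using Z(3) T by blast
qed

text \<open>The converse needs the fibres of T: u is declared bad as soon as some point s u + k
  of its fibre lies in the exceptional set, which is again Zariski closed.\<close>

lemma general_of_general_comp:
  assumes T: "\<And>w. w \<in> cspace J \<Longrightarrow> T w \<in> cspace I"
    and T_diff: "\<And>w w'. w \<in> cspace J \<Longrightarrow> w' \<in> cspace J \<Longrightarrow> T (\<lambda>j. w j - w' j) = (\<lambda>i. T w i - T w' i)"
    and s: "\<And>u. u \<in> cspace I \<Longrightarrow> s u \<in> cspace J"
    and s_poly: "\<And>j. j \<in> J \<Longrightarrow> (\<lambda>u. s u j) \<in> polyfun I"
    and T_s: "\<And>u. u \<in> cspace I \<Longrightarrow> T (s u) = u"
    and "general J (\<lambda>w. Q (T w))"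
  shows "general I Q"
proof -
  obtain Z' where Z': "affine_variety J Z'" "Z' \<noteq> cspace J" "\<forall>w\<in>cspace J - Z'. Q (T w)"
    using \<open>general J (\<lambda>w. Q (T w))\<close> unfolding general_def by blast
  define K where "K = {k \<in> cspace J. T k = (\<lambda>i. 0)}"
  define Z where "Z = {u \<in> cspace I. \<forall>k\<in>K. (\<lambda>j. s u j + k j) \<in> Z'}"
  have translate: "(\<lambda>j. s u j + k j) \<in> cspace J" if "u \<in> cspace I" "k \<in> K" for u k
    using s[OF that(1)] that(2) by (auto simp: K_def cspace_def)
  have fibre: "T (\<lambda>j. s u j + k j) = u" if "u \<in> cspace I" "k \<in> K" for u k
  proof -
    have "T (\<lambda>j. (s u j + k j) - k j) = (\<lambda>i. T (\<lambda>j. s u j + k j) i - T k i)"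
      using translate[OF that] that(2) by (intro T_diff) (auto simp: K_def)
    then show ?thesis using that T_s by (simp add: K_def)
  qed
  have kernel: "(\<lambda>j. w j - s (T w) j) \<in> K" if "w \<in> cspace J" for w
    using T_diff[OF that s[OF T[OF that]]] T_s[OF T[OF that]] that s[OF T[OF that]]
    by (auto simp: K_def cspace_def)
  have "affine_variety I Z"
    unfolding Z_def
  proof (rule affine_variety_INT, rule affine_variety_vimage[OF _ _ Z'(1)])
    show "(\<lambda>j. s x j + k j) \<in> cspace J" if "x \<in> cspace I" "k \<in> K" for x k
      using translate that .
    show "(\<lambda>x. s x j + k j) \<in> polyfun I" if "j \<in> J" for j k
      by (rule polyfun.add[OF s_poly[OF that] polyfun.const])
  qed
  moreover have "Z \<noteq> cspace I"
  proof -
    obtain w where w: "w \<in> cspace J" "w \<notin> Z'"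
      using Z'(2) affine_variety_subset[OF Z'(1)] by blast
    define k where "k = (\<lambda>j. w j - s (T w) j)"
    have "k \<in> K" unfolding k_def using kernel[OF w(1)] .
    moreover have "(\<lambda>j. s (T w) j + k j) = w" by (simp add: k_def)
    ultimately have "k \<in> K \<and> (\<lambda>j. s (T w) j + k j) \<notin> Z'" using w(2) by simp
    then have "T w \<notin> Z" unfolding Z_def by blast
    then show ?thesis using T[OF w(1)] by blast
  qed
  moreover have "Q u" if u: "u \<in> cspace I - Z" for u
  proof -
    obtain k where k: "k \<in> K" "(\<lambda>j. s u j + k j) \<notin> Z'"
      using u unfolding Z_def by blast
    have "T (\<lambda>j. s u j + k j) = u" using fibre u k(1) by blast
    moreover have "Q (T (\<lambda>j. s u j + k j))"
      using Z'(3) translate[of u k] k u by blast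
    ultimately show ?thesis by simp
  qed
  ultimately show ?thesis unfolding general_def by blast
qed

lemma general_comp_iff:
  assumes "\<And>w. w \<in> cspace J \<Longrightarrow> T w \<in> cspace I"
    and "\<And>w w'. w \<in> cspace J \<Longrightarrow> w' \<in> cspace J \<Longrightarrow> T (\<lambda>j. w j - w' j) = (\<lambda>i. T w i - T w' i)"
    and "\<And>i. i \<in> I \<Longrightarrow> (\<lambda>w. T w i) \<in> polyfun J"
    and "\<And>u. u \<in> cspace I \<Longrightarrow> s u \<in> cspace J"
    and "\<And>j. j \<in> J \<Longrightarrow> (\<lambda>u. s u j) \<in> polyfun I"
    and "\<And>u. u \<in> cspace I \<Longrightarrow> T (s u) = u"
  shows "general J (\<lambda>w. Q (T w)) \<longleftrightarrow> general I Q"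
proof
  show "general J (\<lambda>w. Q (T w)) \<Longrightarrow> general I Q"
    by (rule general_of_general_comp[OF assms(1,2,4,5,6)])
  have "cspace I \<subseteq> T ` cspace J" using assms(4,6) by (metis image_eqI subsetI)
  then show "general I Q \<Longrightarrow> general J (\<lambda>w. Q (T w))"
    using general_comp_of_general[OF assms(1,3), of Q] by blast
qed

section \<open>Gaussian critical points\<close>

text \<open>Coefficients of the linear functional V \<mapsto> tr(VS) in the coordinates V(i,j), i \<le> j:
  an off-diagonal coordinate occurs twice in the trace.\<close>

definition trace_coeffs :: "nat \<Rightarrow> (nat \<times> nat \<Rightarrow> complex) \<Rightarrow> (nat \<times> nat \<Rightarrow> complex)" where
  "trace_coeffs m S = (\<lambda>k. if k \<in> symidx m then (if fst k = snd k then 1 else 2) * S k else 0)"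

definition trace_coeffs_inv :: "nat \<Rightarrow> (nat \<times> nat \<Rightarrow> complex) \<Rightarrow> (nat \<times> nat \<Rightarrow> complex)" where
  "trace_coeffs_inv m u = (\<lambda>k. if k \<in> symidx m then (if fst k = snd k then 1 else 1/2) * u k else 0)"

lemma finite_symidx: "finite (symidx m)"
  by (rule finite_subset[of _ "{..<m} \<times> {..<m}"]) (auto simp: symidx_def)

lemma trace_symmat:
  "(\<Sum>i<m. \<Sum>j<m. symmat m V $$ (i,j) * symmat m S $$ (j,i))
     = (\<Sum>k\<in>symidx m. trace_coeffs m S k * V k)"
proof -
  define sym :: "nat \<times> nat \<Rightarrow> nat \<times> nat" where "sym p = (min (fst p) (snd p), max (fst p) (snd p))" for p
  define h where "h k = V k * S k" for k
  have fibre: "{p \<in> {..<m} \<times> {..<m}. sym p = k} = {k, (snd k, fst k)}" if k: "k \<in> symidx m" for k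
  proof -
    obtain a c where "k = (a, c)" "a \<le> c" "c < m" using k by (auto simp: symidx_def)
    then show ?thesis by (auto simp: sym_def min_def max_def)
  qed
  have "(\<Sum>i<m. \<Sum>j<m. symmat m V $$ (i,j) * symmat m S $$ (j,i)) = (\<Sum>p\<in>{..<m} \<times> {..<m}. h (sym p))"
    by (simp add: sum.cartesian_product symmat_def h_def sym_def min.commute max.commute case_prod_beta)
  also have "\<dots> = (\<Sum>k\<in>sym ` ({..<m} \<times> {..<m}). \<Sum>p\<in>{p \<in> {..<m} \<times> {..<m}. sym p = k}. h (sym p))"
    by (rule sum.image_gen) simp
  also have "sym ` ({..<m} \<times> {..<m}) = symidx m"
  proof
    show "sym ` ({..<m} \<times> {..<m}) \<subseteq> symidx m" by (auto simp: sym_def symidx_def)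
    show "symidx m \<subseteq> sym ` ({..<m} \<times> {..<m})"
    proof
      fix k assume "k \<in> symidx m"
      then have "k = sym k" "k \<in> {..<m} \<times> {..<m}" by (auto simp: sym_def symidx_def)
      then show "k \<in> sym ` ({..<m} \<times> {..<m})" by blast
    qed
  qed
  also have "(\<Sum>k\<in>symidx m. \<Sum>p\<in>{p \<in> {..<m} \<times> {..<m}. sym p = k}. h (sym p))
      = (\<Sum>k\<in>symidx m. trace_coeffs m S k * V k)"
  proof (rule sum.cong[OF refl])
    fix k assume k: "k \<in> symidx m"
    have "(\<Sum>p\<in>{p \<in> {..<m} \<times> {..<m}. sym p = k}. h (sym p)) = of_nat (card {k, (snd k, fst k)}) * h k"
      unfolding fibre[OF k, symmetric] by simp
    also have "of_nat (card {k, (snd k, fst k)}) = (if fst k = snd k then 1 else 2 :: complex)"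
      by (cases k) auto
    finally show "(\<Sum>p\<in>{p \<in> {..<m} \<times> {..<m}. sym p = k}. h (sym p)) = trace_coeffs m S k * V k"
      using k by (simp add: trace_coeffs_def h_def)
  qed
  finally show ?thesis .
qed

lemma gauss_crit_eq_ml_crit: "gauss_crit m X S = ml_crit (symidx m) (detF m) X (trace_coeffs m S)"
  unfolding gauss_crit_def ml_crit_def trace_symmat by simp

lemma general_comp_trace_coeffs:
  "general (symidx m) (\<lambda>S. Q (trace_coeffs m S)) \<longleftrightarrow> general (symidx m) Q"
proof (rule general_comp_iff[where s = "trace_coeffs_inv m"])
  show "(\<lambda>w. trace_coeffs m w i) \<in> polyfun (symidx m)" if "i \<in> symidx m" for i
    using polyfun_cmult[OF polyfun.coord[OF that]] that by (simp add: trace_coeffs_def)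
  show "(\<lambda>u. trace_coeffs_inv m u k) \<in> polyfun (symidx m)" if "k \<in> symidx m" for k
    using polyfun_cmult[OF polyfun.coord[OF that]] that by (simp add: trace_coeffs_inv_def)
qed (auto simp: trace_coeffs_def trace_coeffs_inv_def cspace_def right_diff_distrib)

lemma MLD_detF_eq_gaussian_MLD: "MLD (symidx m) (detF m) X = gaussian_MLD m X"
proof -
  have "general (symidx m) (\<lambda>S. finite (gauss_crit m X S) \<and> card (gauss_crit m X S) = N)
    \<longleftrightarrow> general (symidx m) (\<lambda>u. finite (ml_crit (symidx m) (detF m) X u) \<and> card (ml_crit (symidx m) (detF m) X u) = N)" for N
    unfolding gauss_crit_eq_ml_crit by (rule general_comp_trace_coeffs)
  then show ?thesis unfolding MLD_def gaussian_MLD_def by simp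
qed

section \<open>Independence and dimension under injective maps\<close>

lemma cindep_of_cindep_image:
  assumes lin: "\<And>c. f (\<lambda>i. \<Sum>v\<in>S. c v * v i) = (\<lambda>k. \<Sum>v\<in>S. c v * f v k)"
    and inj: "inj_on f S" and indep: "cindep (f ` S)"
  shows "cindep S"
  unfolding cindep_def
proof (intro conjI allI impI ballI)
  show "finite S" using indep inj finite_image_iff unfolding cindep_def by blast
  fix c v assume rel: "\<forall>i. (\<Sum>v\<in>S. c v * v i) = 0" and v: "v \<in> S"
  have "(\<lambda>i. \<Sum>v\<in>S. c v * v i) = (\<lambda>i. \<Sum>v\<in>S. 0 * v i)" using rel by simp
  then have rel': "(\<Sum>v\<in>S. c v * f v k) = 0" for k
    using lin[of c] lin[of "\<lambda>_. 0"] by (simp add: fun_eq_iff)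
  have "(\<Sum>w\<in>f ` S. c (the_inv_into S f w) * w k) = (\<Sum>v\<in>S. c v * f v k)" for k
    unfolding sum.reindex[OF inj] by (intro sum.cong) (simp_all add: the_inv_into_f_f[OF inj])
  then have "\<forall>k. (\<Sum>w\<in>f ` S. c (the_inv_into S f w) * w k) = 0"
    using rel' by simp
  then have "\<forall>w\<in>f ` S. c (the_inv_into S f w) = 0"
    using indep unfolding cindep_def by (elim conjE allE[where x = "\<lambda>w. c (the_inv_into S f w)"]) simp
  then show "c v = 0" using v the_inv_into_f_f[OF inj v] by force
qed

lemma cdim_image:
  assumes inj: "inj_on f T" and indep: "\<And>S. S \<subseteq> T \<Longrightarrow> cindep (f ` S) \<longleftrightarrow> cindep S"
  shows "cdim (f ` T) = cdim T"
proof -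
  have card: "card (f ` S) = card S" if "S \<subseteq> T" for S
    using card_image inj_on_subset[OF inj that] by blast
  have "{card S | S. S \<subseteq> f ` T \<and> cindep S} = {card S | S. S \<subseteq> T \<and> cindep S}"
  proof (rule Set.set_eqI, rule iffI)
    fix n assume "n \<in> {card S | S. S \<subseteq> f ` T \<and> cindep S}"
    then obtain S where "S \<subseteq> T" "cindep (f ` S)" "n = card (f ` S)"
      by (auto simp: subset_image_iff)
    then show "n \<in> {card S | S. S \<subseteq> T \<and> cindep S}" using indep card by auto
  next
    fix n assume "n \<in> {card S | S. S \<subseteq> T \<and> cindep S}"
    then obtain S where "S \<subseteq> T" "cindep S" "n = card S" by blast
    then show "n \<in> {card S | S. S \<subseteq> f ` T \<and> cindep S}"
      using indep card image_mono by (metis (mono_tags, lifting) mem_Collect_eq)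
  qed
  then show ?thesis unfolding cdim_def by simp
qed

lemma irreducible_chain_image:
  assumes chain: "\<forall>k\<le>n. irreducible_variety I (Z k) \<and> Z k \<subseteq> X" "\<forall>k<n. Z k \<subset> Z (Suc k)"
    and irr: "\<And>Z. irreducible_variety I Z \<Longrightarrow> Z \<subseteq> X \<Longrightarrow> irreducible_variety J (f Z)"
    and sub: "\<And>Z. Z \<subseteq> X \<Longrightarrow> f Z \<subseteq> Y"
    and strict: "\<And>Z Z'. Z' \<subseteq> X \<Longrightarrow> Z \<subset> Z' \<Longrightarrow> f Z \<subset> f Z'"
  shows "\<exists>W. (\<forall>k\<le>n. irreducible_variety J (W k) \<and> W k \<subseteq> Y) \<and> (\<forall>k<n. W k \<subset> W (Suc k))"
proof (intro exI conjI allI impI)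
  show "irreducible_variety J (f (Z k))" "f (Z k) \<subseteq> Y" if "k \<le> n" for k
    using irr sub chain(1) that by blast+
  show "f (Z k) \<subset> f (Z (Suc k))" if "k < n" for k
  proof (rule strict)
    show "Z (Suc k) \<subseteq> X" using chain(1) that by (simp add: Suc_leI)
    show "Z k \<subset> Z (Suc k)" using chain(2) that by blast
  qed
qed

lemma var_dim_eqI:
  assumes f_irr: "\<And>Z. irreducible_variety I Z \<Longrightarrow> Z \<subseteq> X \<Longrightarrow> irreducible_variety J (f Z)"
    and f_sub: "\<And>Z. Z \<subseteq> X \<Longrightarrow> f Z \<subseteq> Y"
    and f_strict: "\<And>Z Z'. Z' \<subseteq> X \<Longrightarrow> Z \<subset> Z' \<Longrightarrow> f Z \<subset> f Z'"
    and g_irr: "\<And>W. irreducible_variety J W \<Longrightarrow> W \<subseteq> Y \<Longrightarrow> irreducible_variety I (g W)"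
    and g_sub: "\<And>W. W \<subseteq> Y \<Longrightarrow> g W \<subseteq> X"
    and g_strict: "\<And>W W'. W' \<subseteq> Y \<Longrightarrow> W \<subset> W' \<Longrightarrow> g W \<subset> g W'"
  shows "var_dim J Y = var_dim I X"
proof -
  have "(\<exists>W. (\<forall>k\<le>n. irreducible_variety J (W k) \<and> W k \<subseteq> Y) \<and> (\<forall>k<n. W k \<subset> W (Suc k)))
    \<longleftrightarrow> (\<exists>Z. (\<forall>k\<le>n. irreducible_variety I (Z k) \<and> Z k \<subseteq> X) \<and> (\<forall>k<n. Z k \<subset> Z (Suc k)))" for n
  proof
    assume "\<exists>W. (\<forall>k\<le>n. irreducible_variety J (W k) \<and> W k \<subseteq> Y) \<and> (\<forall>k<n. W k \<subset> W (Suc k))"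
    then obtain W where "\<forall>k\<le>n. irreducible_variety J (W k) \<and> W k \<subseteq> Y" "\<forall>k<n. W k \<subset> W (Suc k)"
      by blast
    then show "\<exists>Z. (\<forall>k\<le>n. irreducible_variety I (Z k) \<and> Z k \<subseteq> X) \<and> (\<forall>k<n. Z k \<subset> Z (Suc k))"
      by (rule irreducible_chain_image[where f = g]) (use g_irr g_sub g_strict in auto)
  next
    assume "\<exists>Z. (\<forall>k\<le>n. irreducible_variety I (Z k) \<and> Z k \<subseteq> X) \<and> (\<forall>k<n. Z k \<subset> Z (Suc k))"
    then obtain Z where "\<forall>k\<le>n. irreducible_variety I (Z k) \<and> Z k \<subseteq> X" "\<forall>k<n. Z k \<subset> Z (Suc k)"
      by blast
    then show "\<exists>W. (\<forall>k\<le>n. irreducible_variety J (W k) \<and> W k \<subseteq> Y) \<and> (\<forall>k<n. W k \<subset> W (Suc k))"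
      by (rule irreducible_chain_image[where f = f]) (use f_irr f_sub f_strict in auto)
  qed
  then show ?thesis unfolding var_dim_def by simp
qed

section \<open>Affine embeddings\<close>

text \<open>A copies each coordinate x i to the coordinate pos i, so reading these coordinates back
  (coords) is a polynomial left inverse of A.\<close>

locale affine_embedding =
  fixes I :: "'i set" and J :: "'j set" and A :: "('i \<Rightarrow> complex) \<Rightarrow> ('j \<Rightarrow> complex)"
    and b :: "'j \<Rightarrow> complex" and M :: "'j \<Rightarrow> 'i \<Rightarrow> complex" and pos :: "'i \<Rightarrow> 'j"
  assumes finite_I: "finite I" and finite_J: "finite J"
    and A_eq: "\<And>x. A x = (\<lambda>k. b k + (\<Sum>i\<in>I. M k i * x i))"
    and A_cspace: "\<And>x. x \<in> cspace I \<Longrightarrow> A x \<in> cspace J"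
    and pos_in_J: "\<And>i. i \<in> I \<Longrightarrow> pos i \<in> J"
    and A_pos: "\<And>x i. i \<in> I \<Longrightarrow> A x (pos i) = x i"
begin

definition coords :: "('j \<Rightarrow> complex) \<Rightarrow> ('i \<Rightarrow> complex)" where
  "coords y = (\<lambda>i. if i \<in> I then y (pos i) else 0)"

definition lin :: "('i \<Rightarrow> complex) \<Rightarrow> ('j \<Rightarrow> complex)" where
  "lin v = (\<lambda>k. \<Sum>i\<in>I. M k i * v i)"

definition preim :: "('j \<Rightarrow> complex) set \<Rightarrow> ('i \<Rightarrow> complex) set" where
  "preim Z = {x \<in> cspace I. A x \<in> Z}"

lemma coords_cspace: "coords y \<in> cspace I"
  unfolding coords_def cspace_def by auto

lemma coords_A: "x \<in> cspace I \<Longrightarrow> coords (A x) = x"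
  unfolding coords_def cspace_def using A_pos by auto

lemma inj_on_A: "inj_on A (cspace I)"
  by (metis coords_A inj_onI)

lemma A_polyfun: "(\<lambda>x. A x k) \<in> polyfun I"
  unfolding A_eq by (intro polyfun.add polyfun.const polyfun_sum finite_I polyfun_cmult polyfun.coord)

lemma coords_polyfun: "i \<in> I \<Longrightarrow> (\<lambda>y. coords y i) \<in> polyfun J"
  unfolding coords_def using polyfun.coord[OF pos_in_J] by simp

lemma lin_eq: "lin v = (\<lambda>k. A v k - A (\<lambda>_. 0) k)"
  unfolding lin_def A_eq by simp

lemma lin_cspace: "v \<in> cspace I \<Longrightarrow> lin v \<in> cspace J"
  unfolding lin_eq using A_cspace[of v] A_cspace[of "\<lambda>_. 0"] by (auto simp: cspace_def)

lemma lin_sum: "lin (\<lambda>i. \<Sum>v\<in>S. c v * v i) = (\<lambda>k. \<Sum>v\<in>S. c v * lin v k)"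
  unfolding lin_def by (auto simp: sum_distrib_left intro: sum.swap[THEN trans] intro!: ext sum.cong)

lemma coords_sum: "coords (\<lambda>k. \<Sum>v\<in>S. c v * v k) = (\<lambda>i. \<Sum>v\<in>S. c v * coords v i)"
  unfolding coords_def by auto

lemma A_line: "A (\<lambda>i. p i + t * v i) = (\<lambda>k. A p k + t * lin v k)"
  unfolding A_eq lin_def by (auto simp: algebra_simps sum.distrib sum_distrib_left)

lemma dirderiv_comp_A: "dirderiv g (A p) (lin v) = dirderiv (\<lambda>x. g (A x)) p v"
  unfolding dirderiv_def A_line by simp

lemma M_pos: "i \<in> I \<Longrightarrow> i' \<in> I \<Longrightarrow> M (pos i) i' = (if i' = i then 1 else 0)"
  using A_pos[of i "\<lambda>j. if j = i' then 1 else 0"] A_pos[of i "\<lambda>_. 0"] finite_I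
  by (auto simp: A_eq if_distrib sum.delta' cong: if_cong split: if_splits)

lemma coords_lin: "v \<in> cspace I \<Longrightarrow> coords (lin v) = v"
  unfolding lin_eq using coords_A[of v] A_pos
  by (auto simp: coords_def cspace_def)

lemma inj_on_lin: "inj_on lin (cspace I)"
  by (metis coords_lin inj_onI)

definition image_eq :: "'j \<Rightarrow> ('j \<Rightarrow> complex) \<Rightarrow> complex" where
  "image_eq k y = y k - b k - (\<Sum>i\<in>I. M k i * y (pos i))"

lemma image_eq_polyfun: "k \<in> J \<Longrightarrow> image_eq k \<in> polyfun J"
  unfolding image_eq_def
  by (intro polyfun_diff polyfun.coord polyfun.const polyfun_sum finite_I polyfun_cmult pos_in_J)

lemma image_eq_A: "image_eq k (A x) = 0"
  unfolding image_eq_def using A_pos by (simp add: A_eq)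

lemma A_coords:
  assumes "y \<in> cspace J" "\<forall>k\<in>J. image_eq k y = 0"
  shows "A (coords y) = y"
proof
  fix k show "A (coords y) k = y k"
  proof (cases "k \<in> J")
    case True
    then have "y k = b k + (\<Sum>i\<in>I. M k i * y (pos i))"
      using assms(2) by (simp add: image_eq_def algebra_simps)
    then show ?thesis by (auto simp: A_eq coords_def intro!: sum.cong)
  next
    case False
    then show ?thesis using assms(1) A_cspace[OF coords_cspace] by (auto simp: cspace_def)
  qed
qed

lemma dirderiv_image_eq: "dirderiv (image_eq k) q w = w k - (\<Sum>i\<in>I. M k i * w (pos i))"
  by (rule dirderiv_affine_line) (simp add: image_eq_def algebra_simps sum.distrib sum_distrib_left)

lemma affine_variety_image:
  assumes "affine_variety I Z"
  shows "affine_variety J (A ` Z)"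
proof -
  obtain P where P: "P \<subseteq> polyfun I" "Z = zero_set I P"
    using assms unfolding affine_variety_def by blast
  define P' where "P' = image_eq ` J \<union> (\<lambda>f y. f (coords y)) ` P"
  have "(\<lambda>y. f (coords y)) \<in> polyfun J" if "f \<in> P" for f
    using polyfun_comp[of f I coords J] P(1) that coords_polyfun by blast
  then have "P' \<subseteq> polyfun J"
    unfolding P'_def using image_eq_polyfun by blast
  moreover have "A ` Z = zero_set J P'"
  proof
    show "A ` Z \<subseteq> zero_set J P'"
    proof
      fix y assume "y \<in> A ` Z"
      then obtain x where x: "x \<in> cspace I" "\<forall>f\<in>P. f x = 0" "y = A x"
        using P(2) unfolding zero_set_def by blast
      then show "y \<in> zero_set J P'"
        using A_cspace image_eq_A coords_A unfolding P'_def zero_set_def by auto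
    qed
    show "zero_set J P' \<subseteq> A ` Z"
    proof
      fix y assume "y \<in> zero_set J P'"
      then have y: "y \<in> cspace J" "\<forall>k\<in>J. image_eq k y = 0" "\<forall>f\<in>P. f (coords y) = 0"
        unfolding P'_def zero_set_def by auto
      then have "coords y \<in> Z"
        using P(2) coords_cspace unfolding zero_set_def by blast
      then show "y \<in> A ` Z" using A_coords[OF y(1,2)] by (metis image_eqI)
    qed
  qed
  ultimately show ?thesis unfolding affine_variety_def by blast
qed

lemma affine_variety_preim: "affine_variety J Z \<Longrightarrow> affine_variety I (preim Z)"
  unfolding preim_def by (rule affine_variety_vimage[OF A_cspace A_polyfun])

lemma A_preim: "Z \<subseteq> A ` cspace I \<Longrightarrow> A ` preim Z = Z"
  unfolding preim_def by auto

lemma preim_subset: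
  assumes "X \<subseteq> cspace I" "W \<subseteq> A ` X"
  shows "preim W \<subseteq> X"
proof
  fix x assume "x \<in> preim W"
  then have x: "x \<in> cspace I" "A x \<in> A ` X" using assms(2) by (auto simp: preim_def)
  then obtain z where "z \<in> X" "A x = A z" by blast
  then show "x \<in> X" using inj_on_A x(1) assms(1) by (metis inj_onD subsetD)
qed

lemma irreducible_variety_image:
  assumes Y: "irreducible_variety I Y"
  shows "irreducible_variety J (A ` Y)"
  unfolding irreducible_variety_def
proof (intro conjI allI impI)
  show "affine_variety J (A ` Y)" "A ` Y \<noteq> {}"
    using Y affine_variety_image unfolding irreducible_variety_def by auto
  fix Z1 Z2 assume Z: "affine_variety J Z1 \<and> affine_variety J Z2 \<and> A ` Y \<subseteq> Z1 \<union> Z2"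
  have "Y \<subseteq> cspace I" using Y affine_variety_subset unfolding irreducible_variety_def by blast
  then have "Y \<subseteq> preim Z1 \<union> preim Z2" using Z unfolding preim_def by auto
  then have "Y \<subseteq> preim Z1 \<or> Y \<subseteq> preim Z2"
    using Y Z affine_variety_preim unfolding irreducible_variety_def by blast
  then show "A ` Y \<subseteq> Z1 \<or> A ` Y \<subseteq> Z2" unfolding preim_def by auto
qed

lemma irreducible_variety_preim:
  assumes Y: "irreducible_variety J Y" and Y_A: "Y \<subseteq> A ` cspace I"
  shows "irreducible_variety I (preim Y)"
  unfolding irreducible_variety_def
proof (intro conjI allI impI)
  show "affine_variety I (preim Y)"
    using Y affine_variety_preim unfolding irreducible_variety_def by blast
  show "preim Y \<noteq> {}"
    using Y A_preim[OF Y_A] unfolding irreducible_variety_def by (metis image_empty)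
  fix Z1 Z2 assume Z: "affine_variety I Z1 \<and> affine_variety I Z2 \<and> preim Y \<subseteq> Z1 \<union> Z2"
  then have "A ` preim Y \<subseteq> A ` Z1 \<union> A ` Z2" by blast
  then have "Y \<subseteq> A ` Z1 \<union> A ` Z2" unfolding A_preim[OF Y_A] .
  moreover have "affine_variety J (A ` Z1)" "affine_variety J (A ` Z2)"
    using Z affine_variety_image by blast+
  ultimately have "Y \<subseteq> A ` Z1 \<or> Y \<subseteq> A ` Z2"
    using Y unfolding irreducible_variety_def by blast
  moreover have "Z1 \<subseteq> cspace I" "Z2 \<subseteq> cspace I"
    using Z affine_variety_subset by blast+
  ultimately show "preim Y \<subseteq> Z1 \<or> preim Y \<subseteq> Z2"
    using preim_subset by blast
qed

lemma var_dim_image: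
  assumes X: "X \<subseteq> cspace I"
  shows "var_dim J (A ` X) = var_dim I X"
proof (rule var_dim_eqI[where f = "image A" and g = preim])
  show "irreducible_variety J (A ` Z)" if "irreducible_variety I Z" for Z
    using irreducible_variety_image[OF that] .
  show "A ` Z \<subseteq> A ` X" if "Z \<subseteq> X" for Z
    using that by blast
  show "A ` Z \<subset> A ` Z'" if "Z' \<subseteq> X" "Z \<subset> Z'" for Z Z'
    using image_strict_mono[OF inj_on_subset[OF inj_on_A] that(2)] that(1) X by blast
  show "irreducible_variety I (preim W)" if "irreducible_variety J W" "W \<subseteq> A ` X" for W
    using irreducible_variety_preim[OF that(1)] that(2) X by blast
  show "preim W \<subseteq> X" if "W \<subseteq> A ` X" for W
    using preim_subset[OF X that] .
  show "preim W \<subset> preim W'" if "W' \<subseteq> A ` X" "W \<subset> W'" for W W'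
  proof -
    have "W \<subseteq> A ` cspace I" "W' \<subseteq> A ` cspace I" using that X by blast+
    then show ?thesis
      using that(2) A_preim unfolding preim_def by blast
  qed
qed

lemma cindep_lin_image:
  assumes S: "S \<subseteq> cspace I"
  shows "cindep (lin ` S) \<longleftrightarrow> cindep S"
proof
  have inj: "inj_on lin S" using inj_on_subset[OF inj_on_lin S] .
  show "cindep (lin ` S) \<Longrightarrow> cindep S"
    by (rule cindep_of_cindep_image[OF lin_sum inj])
  have coords_lin_S: "coords ` lin ` S = S"
    using coords_lin S by (force simp: image_image)
  have "inj_on coords (lin ` S)"
    by (rule inj_on_inverseI[where g = lin]) (use coords_lin S in auto)
  then show "cindep S \<Longrightarrow> cindep (lin ` S)"
    using cindep_of_cindep_image[OF coords_sum] coords_lin_S by simp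
qed

lemma vanishing_ideal_comp_A:
  "g \<in> vanishing_ideal J (A ` X) \<Longrightarrow> (\<lambda>x. g (A x)) \<in> vanishing_ideal I X"
  unfolding vanishing_ideal_def using polyfun_comp[of g J A I] A_polyfun by blast

lemma vanishing_ideal_comp_coords:
  assumes "X \<subseteq> cspace I" "f \<in> vanishing_ideal I X"
  shows "(\<lambda>y. f (coords y)) \<in> vanishing_ideal J (A ` X)"
  using assms polyfun_comp[of f I coords J] coords_polyfun coords_A
  unfolding vanishing_ideal_def by auto

lemma image_eq_vanishing_ideal: "k \<in> J \<Longrightarrow> image_eq k \<in> vanishing_ideal J (A ` X)"
  unfolding vanishing_ideal_def using image_eq_polyfun image_eq_A by auto

lemma tangent_space_subset: "tangent_space I X p \<subseteq> cspace I"
  unfolding tangent_space_def by blast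

lemma tangent_vector_eq_lin_coords:
  assumes w: "w \<in> tangent_space J (A ` X) q"
  shows "w = lin (coords w)"
proof
  fix k show "w k = lin (coords w) k"
  proof (cases "k \<in> J")
    case True
    then have "dirderiv (image_eq k) q w = 0"
      using w image_eq_vanishing_ideal unfolding tangent_space_def by blast
    then have "w k = (\<Sum>i\<in>I. M k i * w (pos i))"
      unfolding dirderiv_image_eq by simp
    also have "\<dots> = lin (coords w) k"
      unfolding lin_def coords_def by (intro sum.cong) auto
    finally show ?thesis .
  next
    case False
    then show ?thesis
      using w lin_cspace[OF coords_cspace] by (auto simp: tangent_space_def cspace_def)
  qed
qed

lemma coords_tangent_vector:
  assumes X: "X \<subseteq> cspace I" and p: "p \<in> cspace I"
    and w: "w \<in> tangent_space J (A ` X) (A p)"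
  shows "coords w \<in> tangent_space I X p"
  unfolding tangent_space_def
proof (intro CollectI conjI ballI coords_cspace)
  fix f assume f: "f \<in> vanishing_ideal I X"
  have "dirderiv (\<lambda>y. f (coords y)) (A p) (lin (coords w)) = 0"
    using w vanishing_ideal_comp_coords[OF X f] tangent_vector_eq_lin_coords[OF w, symmetric]
    unfolding tangent_space_def by simp
  then have "dirderiv (\<lambda>x. f (coords (A x))) p (coords w) = 0"
    unfolding dirderiv_comp_A .
  moreover have "(\<lambda>i. p i + t * coords w i) \<in> cspace I" for t
    using p coords_cspace[of w] by (simp add: cspace_def)
  then have "dirderiv (\<lambda>x. f (coords (A x))) p (coords w) = dirderiv f p (coords w)"
    using coords_A by (intro dirderiv_cong) simp
  ultimately show "dirderiv f p (coords w) = 0" by simp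
qed

lemma lin_tangent_vector:
  assumes v: "v \<in> tangent_space I X p"
  shows "lin v \<in> tangent_space J (A ` X) (A p)"
  unfolding tangent_space_def
proof (intro CollectI conjI ballI)
  show "lin v \<in> cspace J" using v tangent_space_subset lin_cspace by blast
  fix g assume "g \<in> vanishing_ideal J (A ` X)"
  then have "(\<lambda>x. g (A x)) \<in> vanishing_ideal I X" by (rule vanishing_ideal_comp_A)
  then show "dirderiv g (A p) (lin v) = 0"
    using v unfolding dirderiv_comp_A tangent_space_def by blast
qed

lemma tangent_space_image:
  assumes X: "X \<subseteq> cspace I" and p: "p \<in> cspace I"
  shows "tangent_space J (A ` X) (A p) = lin ` tangent_space I X p"
proof
  show "tangent_space J (A ` X) (A p) \<subseteq> lin ` tangent_space I X p"
    using coords_tangent_vector[OF X p] tangent_vector_eq_lin_coords by blast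
  show "lin ` tangent_space I X p \<subseteq> tangent_space J (A ` X) (A p)"
    using lin_tangent_vector by blast
qed

lemma smooth_locus_image:
  assumes X: "X \<subseteq> cspace I"
  shows "smooth_locus J (A ` X) = A ` smooth_locus I X"
proof -
  have "cdim (tangent_space J (A ` X) (A p)) = cdim (tangent_space I X p)" if "p \<in> X" for p
  proof -
    have "inj_on lin (tangent_space I X p)"
      using inj_on_subset[OF inj_on_lin tangent_space_subset] .
    moreover have "cindep (lin ` S) \<longleftrightarrow> cindep S" if "S \<subseteq> tangent_space I X p" for S
      using cindep_lin_image[of S] that tangent_space_subset[of X p] by blast
    ultimately have "cdim (lin ` tangent_space I X p) = cdim (tangent_space I X p)"
      by (rule cdim_image)
    then show ?thesis using tangent_space_image[OF X, of p] that X by auto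
  qed
  then show ?thesis unfolding smooth_locus_def var_dim_image[OF X] by auto
qed

end

section \<open>Transport of critical points\<close>

lemma polyfun_line_differentiable:
  "f \<in> polyfun I \<Longrightarrow> (\<lambda>t. f (\<lambda>i. p i + t * v i)) field_differentiable (at t0)"
  by (induction rule: polyfun.induct)
    (auto intro!: derivative_intros intro: field_differentiable_add field_differentiable_mult)

lemma dirderiv_scaled_square:
  assumes "f \<in> polyfun I"
  shows "dirderiv (\<lambda>x. c * (f x)\<^sup>2) p v = c * (2 * f p * dirderiv f p v)"
proof -
  let ?g = "\<lambda>t. f (\<lambda>i. p i + t * v i)"
  have "(?g has_field_derivative deriv ?g 0) (at 0)"
    using polyfun_line_differentiable[OF assms] by (rule field_differentiable_derivI)
  then have "((\<lambda>t. c * (?g t)\<^sup>2) has_field_derivative c * (2 * ?g 0 * deriv ?g 0)) (at 0)"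
    by (auto intro!: derivative_eq_intros)
  then show ?thesis unfolding dirderiv_def by (simp add: DERIV_imp_deriv)
qed

text \<open>If G \<circ> A = c F^2, the log-likelihood of G pulls back to twice that of F, so the data w on
  the big space must be pulled back to half of its composition with the linear part of A.\<close>

locale ml_embedding = affine_embedding I J A b M pos
  for I :: "'i set" and J :: "'j set" and A b M pos +
  fixes F :: "('i \<Rightarrow> complex) \<Rightarrow> complex" and G :: "('j \<Rightarrow> complex) \<Rightarrow> complex" and c :: complex
  assumes F_polyfun: "F \<in> polyfun I"
    and G_A: "\<And>x. x \<in> cspace I \<Longrightarrow> G (A x) = c * (F x)\<^sup>2"
    and c_nonzero: "c \<noteq> 0"
begin

definition pull :: "('j \<Rightarrow> complex) \<Rightarrow> ('i \<Rightarrow> complex)" where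
  "pull w = (\<lambda>i. if i \<in> I then (\<Sum>k\<in>J. w k * M k i) / 2 else 0)"

definition push :: "('i \<Rightarrow> complex) \<Rightarrow> ('j \<Rightarrow> complex)" where
  "push u = (\<lambda>k. \<Sum>i\<in>I. (if k = pos i then 2 else 0) * u i)"

lemma dirderiv_G:
  assumes p: "p \<in> cspace I" and v: "v \<in> cspace I"
  shows "dirderiv G (A p) (lin v) = c * (2 * F p * dirderiv F p v)"
proof -
  have "(\<lambda>i. p i + t * v i) \<in> cspace I" for t using p v unfolding cspace_def by auto
  then have "dirderiv (\<lambda>x. G (A x)) p v = dirderiv (\<lambda>x. c * (F x)\<^sup>2) p v"
    using G_A by (intro dirderiv_cong) simp
  then show ?thesis
    unfolding dirderiv_comp_A dirderiv_scaled_square[OF F_polyfun] .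
qed

lemma sum_pull: "(\<Sum>k\<in>J. w k * lin v k) = 2 * (\<Sum>i\<in>I. pull w i * v i)"
proof -
  have "(\<Sum>k\<in>J. w k * lin v k) = (\<Sum>k\<in>J. \<Sum>i\<in>I. w k * M k i * v i)"
    unfolding lin_def by (simp add: sum_distrib_left mult.assoc)
  also have "\<dots> = (\<Sum>i\<in>I. \<Sum>k\<in>J. w k * M k i * v i)"
    by (rule sum.swap)
  also have "\<dots> = (\<Sum>i\<in>I. 2 * (pull w i * v i))"
    unfolding pull_def by (rule sum.cong) (auto simp: sum_distrib_right)
  finally show ?thesis by (simp add: sum_distrib_left)
qed

lemma critical_condition_image:
  assumes X: "X \<subseteq> cspace I" and p: "p \<in> cspace I"
  shows "(G (A p) \<noteq> 0 \<and> (\<forall>v'\<in>tangent_space J (A ` X) (A p).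
            dirderiv G (A p) v' / G (A p) - (\<Sum>k\<in>J. w k * v' k) = 0))
     \<longleftrightarrow> (F p \<noteq> 0 \<and> (\<forall>v\<in>tangent_space I X p. dirderiv F p v / F p - (\<Sum>i\<in>I. pull w i * v i) = 0))"
proof (cases "F p = 0")
  case True
  then show ?thesis using G_A[OF p] by simp
next
  case False
  have double: "dirderiv G (A p) (lin v) / G (A p) - (\<Sum>k\<in>J. w k * lin v k)
      = 2 * (dirderiv F p v / F p - (\<Sum>i\<in>I. pull w i * v i))" if "v \<in> cspace I" for v
  proof -
    have "c * (2 * F p * dirderiv F p v) / (c * (F p)\<^sup>2) = 2 * (dirderiv F p v / F p)"
      using c_nonzero False by (simp add: power2_eq_square)
    then show ?thesis
      unfolding dirderiv_G[OF p that] G_A[OF p] sum_pull by (simp add: algebra_simps)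
  qed
  have "(\<forall>v'\<in>lin ` tangent_space I X p. dirderiv G (A p) v' / G (A p) - (\<Sum>k\<in>J. w k * v' k) = 0)
    \<longleftrightarrow> (\<forall>v\<in>tangent_space I X p. dirderiv G (A p) (lin v) / G (A p) - (\<Sum>k\<in>J. w k * lin v k) = 0)"
    by (rule ball_simps(9))
  also have "\<dots> \<longleftrightarrow> (\<forall>v\<in>tangent_space I X p. dirderiv F p v / F p - (\<Sum>i\<in>I. pull w i * v i) = 0)"
  proof (rule ball_cong[OF refl])
    fix v assume "v \<in> tangent_space I X p"
    then have "v \<in> cspace I" using tangent_space_subset by blast
    then show "(dirderiv G (A p) (lin v) / G (A p) - (\<Sum>k\<in>J. w k * lin v k) = 0)
      \<longleftrightarrow> (dirderiv F p v / F p - (\<Sum>i\<in>I. pull w i * v i) = 0)"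
      by (simp only: double mult_eq_0_iff) simp
  qed
  finally have crit_iff: "(\<forall>v'\<in>lin ` tangent_space I X p. dirderiv G (A p) v' / G (A p) - (\<Sum>k\<in>J. w k * v' k) = 0)
    \<longleftrightarrow> (\<forall>v\<in>tangent_space I X p. dirderiv F p v / F p - (\<Sum>i\<in>I. pull w i * v i) = 0)" .
  moreover have "G (A p) \<noteq> 0" using G_A[OF p] c_nonzero False by simp
  ultimately show ?thesis
    unfolding tangent_space_image[OF X p] using False by blast
qed

lemma ml_crit_image:
  assumes X: "X \<subseteq> cspace I"
  shows "ml_crit J G (A ` X) w = A ` ml_crit I F X (pull w)"
proof -
  have "smooth_locus I X \<subseteq> cspace I" using X unfolding smooth_locus_def by blast
  then show ?thesis
    unfolding ml_crit_def smooth_locus_image[OF X] Compr_image_eq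
    by (intro arg_cong[where f = "image A"] Collect_cong) (use critical_condition_image[OF X] in blast)
qed

lemma pull_push:
  assumes u: "u \<in> cspace I"
  shows "pull (push u) = u"
proof
  fix i show "pull (push u) i = u i"
  proof (cases "i \<in> I")
    case True
    have "(\<Sum>k\<in>J. push u k * M k i) = (\<Sum>i'\<in>I. \<Sum>k\<in>J. (if k = pos i' then 2 * u i' * M k i else 0))"
      unfolding push_def sum_distrib_right by (subst sum.swap) (intro sum.cong refl, auto)
    also have "\<dots> = (\<Sum>i'\<in>I. 2 * u i' * M (pos i') i)"
      by (intro sum.cong refl) (simp add: sum.delta finite_J pos_in_J)
    also have "\<dots> = (\<Sum>i'\<in>I. if i' = i then 2 * u i' else 0)"
      by (intro sum.cong refl) (simp add: M_pos True)
    also have "\<dots> = 2 * u i"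
      using True finite_I by simp
    finally show ?thesis unfolding pull_def using True by simp
  next
    case False
    then show ?thesis using u unfolding pull_def cspace_def by auto
  qed
qed

lemma general_comp_pull: "general J (\<lambda>w. Q (pull w)) \<longleftrightarrow> general I Q"
proof (rule general_comp_iff[where s = push])
  show "(\<lambda>w. pull w i) \<in> polyfun J" if "i \<in> I" for i
  proof -
    have "(\<lambda>w. (1/2) * (\<Sum>k\<in>J. w k * M k i)) \<in> polyfun J"
      by (intro polyfun_cmult polyfun_sum finite_J polyfun.mult polyfun.coord polyfun.const)
    then show ?thesis unfolding pull_def using that by simp
  qed
  show "(\<lambda>u. push u k) \<in> polyfun I" for k
    unfolding push_def
    by (intro polyfun_sum finite_I polyfun_cmult polyfun.coord)
  show "push u \<in> cspace J" for u
    using pos_in_J by (auto simp: push_def cspace_def intro!: sum.neutral)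
  show "pull w \<in> cspace I" for w
    by (simp add: pull_def cspace_def)
  show "pull (\<lambda>j. w j - w' j) = (\<lambda>i. pull w i - pull w' i)" for w w'
    by (simp add: pull_def fun_eq_iff sum_subtractf left_diff_distrib diff_divide_distrib)
  show "pull (push u) = u" if "u \<in> cspace I" for u
    using that by (rule pull_push)
qed

lemma MLD_image:
  assumes X: "X \<subseteq> cspace I"
  shows "MLD J G (A ` X) = MLD I F X"
proof -
  have "ml_crit I F X u \<subseteq> cspace I" for u
    using X unfolding ml_crit_def smooth_locus_def by blast
  then have inj: "inj_on A (ml_crit I F X u)" for u
    using inj_on_subset[OF inj_on_A] by blast
  have "general J (\<lambda>w. finite (ml_crit J G (A ` X) w) \<and> card (ml_crit J G (A ` X) w) = N)
      \<longleftrightarrow> general J (\<lambda>w. finite (ml_crit I F X (pull w)) \<and> card (ml_crit I F X (pull w)) = N)" for N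
    by (simp only: ml_crit_image[OF X] finite_image_iff[OF inj] card_image[OF inj])
  moreover have "general J (\<lambda>w. finite (ml_crit I F X (pull w)) \<and> card (ml_crit I F X (pull w)) = N)
      \<longleftrightarrow> general I (\<lambda>u. finite (ml_crit I F X u) \<and> card (ml_crit I F X u) = N)" for N
    by (rule general_comp_pull)
  ultimately show ?thesis unfolding MLD_def by simp
qed

end

section \<open>Determinantal representations of polynomials\<close>

definition aff :: "'i set \<Rightarrow> (('i \<Rightarrow> complex) \<Rightarrow> complex) \<Rightarrow> bool" where
  "aff I g \<longleftrightarrow> (\<exists>c M. \<forall>x. g x = c + (\<Sum>i\<in>I. M i * x i))"

lemma aff_const: "aff I (\<lambda>x. c)"
  unfolding aff_def by (rule exI[of _ c], rule exI[of _ "\<lambda>i. 0"]) simp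

lemma aff_coord:
  assumes "finite I" "i \<in> I"
  shows "aff I (\<lambda>x. d * x i)"
proof -
  have "(\<Sum>j\<in>I. (if j = i then d else 0) * x j) = (\<Sum>j\<in>I. if j = i then d * x j else 0)" for x
    by (rule sum.cong) auto
  then have "(\<Sum>j\<in>I. (if j = i then d else 0) * x j) = d * x i" for x
    using assms by simp
  then show ?thesis unfolding aff_def by (metis add_0)
qed

lemma aff_if: "(P \<Longrightarrow> aff I f) \<Longrightarrow> (\<not> P \<Longrightarrow> aff I g) \<Longrightarrow> aff I (\<lambda>x. if P then f x else g x)"
  by (cases P) simp_all

lemma aff_choice:
  assumes "\<And>q. aff I (\<lambda>x. A x q)"
  shows "\<exists>b M. \<forall>x. A x = (\<lambda>q. b q + (\<Sum>i\<in>I. M q i * x i))"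
proof -
  have "\<forall>q. \<exists>c. \<exists>M. \<forall>x. A x q = c + (\<Sum>i\<in>I. M i * x i)"
    using assms unfolding aff_def by blast
  then obtain b M where "\<forall>q x. A x q = b q + (\<Sum>i\<in>I. M q i * x i)"
    by metis
  then have "\<forall>x. A x = (\<lambda>q. b q + (\<Sum>i\<in>I. M q i * x i))" by auto
  then show ?thesis by blast
qed

lemma det_unit_upper_triangular:
  assumes A: "A \<in> carrier_mat n n" and "\<And>i j. i < n \<Longrightarrow> j < i \<Longrightarrow> A $$ (i,j) = 0"
    and "\<And>i. i < n \<Longrightarrow> A $$ (i,i) = 1"
  shows "det A = (1 :: 'a :: comm_ring_1)"
proof -
  have "upper_triangular A" unfolding upper_triangular_def using A assms(2) by auto
  then have "det A = prod_list (diag_mat A)" by (rule det_upper_triangular[OF _ A])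
  also have "diag_mat A = replicate n 1"
    using A assms(3) by (auto simp: diag_mat_def intro!: nth_equalityI)
  also have "prod_list (replicate n 1) = (1 :: 'a)" by simp
  finally show ?thesis .
qed

definition affine_unimodular :: "'i set \<Rightarrow> nat \<Rightarrow> (('i \<Rightarrow> complex) \<Rightarrow> complex mat) \<Rightarrow> bool" where
  "affine_unimodular I n N \<longleftrightarrow> (\<forall>x. N x \<in> carrier_mat n n \<and> det (N x) = 1) \<and>
     (\<forall>r c. r < n \<longrightarrow> c < n \<longrightarrow> aff I (\<lambda>x. N x $$ (r,c)))"

text \<open>A representation f x = b \<bullet> N(x)^-1 a of f by a unimodular affine matrix N(x).
  Every polynomial has one, and bordering N(x) by a and b turns f into a determinant.\<close>

definition det_rep ::
    "'i set \<Rightarrow> (('i \<Rightarrow> complex) \<Rightarrow> complex) \<Rightarrow> nat \<Rightarrow> (('i \<Rightarrow> complex) \<Rightarrow> complex mat) \<Rightarrow> complex vec \<Rightarrow> complex vec \<Rightarrow> bool" where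
  "det_rep I f n N a b \<longleftrightarrow> affine_unimodular I n N \<and> a \<in> carrier_vec n \<and> b \<in> carrier_vec n \<and>
     (\<forall>x. \<exists>y. y \<in> carrier_vec n \<and> N x *\<^sub>v y = a \<and> f x = b \<bullet> y)"

lemma four_block_mat_index:
  assumes "A \<in> carrier_mat n1 m1" "D \<in> carrier_mat n2 m2" "r < n1 + n2" "c < m1 + m2"
  shows "four_block_mat A B C D $$ (r,c) = (if r < n1 then if c < m1 then A $$ (r,c) else B $$ (r, c - m1)
     else if c < m1 then C $$ (r - n1, c) else D $$ (r - n1, c - m1))"
  using assms by simp

lemma affine_unimodular_block:
  assumes N1: "affine_unimodular I n1 N1" and N2: "affine_unimodular I n2 N2" and C: "C \<in> carrier_mat n1 n2"
  shows "affine_unimodular I (n1 + n2) (\<lambda>x. four_block_mat (N1 x) C (0\<^sub>m n2 n1) (N2 x))"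
  unfolding affine_unimodular_def
proof (intro conjI allI impI)
  fix x
  have N1x: "N1 x \<in> carrier_mat n1 n1" "det (N1 x) = 1" and N2x: "N2 x \<in> carrier_mat n2 n2" "det (N2 x) = 1"
    using N1 N2 unfolding affine_unimodular_def by auto
  then show "four_block_mat (N1 x) C (0\<^sub>m n2 n1) (N2 x) \<in> carrier_mat (n1 + n2) (n1 + n2)"
    using C by (intro four_block_carrier_mat) auto
  show "det (four_block_mat (N1 x) C (0\<^sub>m n2 n1) (N2 x)) = 1"
    using det_four_block_mat_lower_left_zero[OF N1x(1) C refl N2x(1)] N1x N2x by simp
next
  fix r c assume rc: "r < n1 + n2" "c < n1 + n2"
  have "N1 x \<in> carrier_mat n1 n1" "N2 x \<in> carrier_mat n2 n2" for x
    using N1 N2 unfolding affine_unimodular_def by auto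
  then show "aff I (\<lambda>x. four_block_mat (N1 x) C (0\<^sub>m n2 n1) (N2 x) $$ (r, c))"
    using N1 N2 rc unfolding affine_unimodular_def
    by (subst four_block_mat_index) (auto intro!: aff_if aff_const)
qed

lemma det_rep_const: "det_rep I (\<lambda>x. c) 1 (\<lambda>x. 1\<^sub>m 1) (vec 1 (\<lambda>_. c)) (vec 1 (\<lambda>_. 1))"
  unfolding det_rep_def affine_unimodular_def
proof (intro conjI allI impI)
  fix x
  show "\<exists>y. y \<in> carrier_vec 1 \<and> 1\<^sub>m 1 *\<^sub>v y = vec 1 (\<lambda>_. c) \<and> c = vec 1 (\<lambda>_. 1) \<bullet> y"
    by (rule exI[of _ "vec 1 (\<lambda>_. c)"]) (simp add: scalar_prod_def)
qed (auto intro: aff_const)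

text \<open>The coordinate x i solves [[1, -x i], [0, 1]] y = (0, 1) in its first entry.\<close>

lemma det_rep_coord:
  assumes "finite I" "i \<in> I"
  shows "det_rep I (\<lambda>x. x i) 2 (\<lambda>x. mat 2 2 (\<lambda>(r,c). if r = c then 1 else if r = 0 \<and> c = 1 then - x i else 0))
     (vec 2 (\<lambda>j. if j = 0 then 0 else 1)) (vec 2 (\<lambda>j. if j = 0 then 1 else 0))"
  unfolding det_rep_def affine_unimodular_def
proof (intro conjI allI impI)
  fix x :: "'a \<Rightarrow> complex"
  show "det (mat 2 2 (\<lambda>(r,c). if r = c then 1 else if r = 0 \<and> c = 1 then - x i else 0)) = 1"
    by (rule det_unit_upper_triangular[of _ 2]) auto
  show "\<exists>y. y \<in> carrier_vec 2 \<and>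
      mat 2 2 (\<lambda>(r,c). if r = c then 1 else if r = 0 \<and> c = 1 then - x i else 0) *\<^sub>v y = vec 2 (\<lambda>j. if j = 0 then 0 else 1) \<and>
      x i = vec 2 (\<lambda>j. if j = 0 then 1 else 0) \<bullet> y"
    by (rule exI[of _ "vec 2 (\<lambda>j. if j = 0 then x i else 1)"])
      (auto intro!: eq_vecI simp: scalar_prod_def row_def numeral_2_eq_2 lessThan_Suc atLeast0LessThan)
next
  fix r c :: nat assume "r < 2" "c < 2"
  then show "aff I (\<lambda>x. mat 2 2 (\<lambda>(r,c). if r = c then 1 else if r = 0 \<and> c = 1 then - x i else 0) $$ (r, c))"
    using aff_coord[OF assms, of "-1"] aff_const by (auto intro!: aff_if)
qed auto

lemma zero_mat_mult_vec: "y \<in> carrier_vec m \<Longrightarrow> 0\<^sub>m n m *\<^sub>v y = (0\<^sub>v n :: complex vec)"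
  by (rule eq_vecI) (auto simp: scalar_prod_def)

lemma det_rep_add:
  assumes f: "det_rep I f n1 N1 a1 b1" and g: "det_rep I g n2 N2 a2 b2"
  shows "det_rep I (\<lambda>x. f x + g x) (n1 + n2) (\<lambda>x. four_block_mat (N1 x) (0\<^sub>m n1 n2) (0\<^sub>m n2 n1) (N2 x))
     (a1 @\<^sub>v a2) (b1 @\<^sub>v b2)"
  unfolding det_rep_def
proof (intro conjI allI)
  have a: "a1 \<in> carrier_vec n1" "a2 \<in> carrier_vec n2" and b: "b1 \<in> carrier_vec n1" "b2 \<in> carrier_vec n2"
    and N: "\<And>x. N1 x \<in> carrier_mat n1 n1" "\<And>x. N2 x \<in> carrier_mat n2 n2"
    using f g unfolding det_rep_def affine_unimodular_def by auto
  show "affine_unimodular I (n1 + n2) (\<lambda>x. four_block_mat (N1 x) (0\<^sub>m n1 n2) (0\<^sub>m n2 n1) (N2 x))"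
    using f g unfolding det_rep_def by (intro affine_unimodular_block) auto
  show "a1 @\<^sub>v a2 \<in> carrier_vec (n1 + n2)" "b1 @\<^sub>v b2 \<in> carrier_vec (n1 + n2)"
    using a b by auto
  fix x
  obtain y1 where y1: "y1 \<in> carrier_vec n1" "N1 x *\<^sub>v y1 = a1" "f x = b1 \<bullet> y1"
    using f unfolding det_rep_def by blast
  obtain y2 where y2: "y2 \<in> carrier_vec n2" "N2 x *\<^sub>v y2 = a2" "g x = b2 \<bullet> y2"
    using g unfolding det_rep_def by blast
  have "four_block_mat (N1 x) (0\<^sub>m n1 n2) (0\<^sub>m n2 n1) (N2 x) *\<^sub>v (y1 @\<^sub>v y2)
      = (N1 x *\<^sub>v y1 + 0\<^sub>m n1 n2 *\<^sub>v y2) @\<^sub>v (0\<^sub>m n2 n1 *\<^sub>v y1 + N2 x *\<^sub>v y2)"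
    by (rule four_block_mat_mult_vec[OF N(1) _ _ N(2) y1(1) y2(1)]) auto
  also have "\<dots> = a1 @\<^sub>v a2"
    using y1 y2 a by (simp add: zero_mat_mult_vec)
  finally show "\<exists>y. y \<in> carrier_vec (n1 + n2) \<and>
      four_block_mat (N1 x) (0\<^sub>m n1 n2) (0\<^sub>m n2 n1) (N2 x) *\<^sub>v y = a1 @\<^sub>v a2 \<and> f x + g x = (b1 @\<^sub>v b2) \<bullet> y"
    using y1 y2 scalar_prod_append[OF b y1(1) y2(1)] by (intro exI[of _ "y1 @\<^sub>v y2"]) auto
qed

text \<open>The coupling block -a1 b2^T feeds the value b2 \<bullet> y2 back into the first block.\<close>

lemma four_block_coupled_mult_vec:
  assumes N1: "N1 \<in> carrier_mat n1 n1" and N2: "N2 \<in> carrier_mat n2 n2" and a1: "a1 \<in> carrier_vec n1"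
    and y1: "y1 \<in> carrier_vec n1" "N1 *\<^sub>v y1 = a1" and y2: "y2 \<in> carrier_vec n2"
  shows "four_block_mat N1 (mat n1 n2 (\<lambda>(r,c). - (a1 $ r * b2 $ c))) (0\<^sub>m n2 n1) N2 *\<^sub>v (((b2 \<bullet> y2) \<cdot>\<^sub>v y1) @\<^sub>v y2)
    = (0\<^sub>v n1 :: complex vec) @\<^sub>v (N2 *\<^sub>v y2)"
proof -
  define C where "C = mat n1 n2 (\<lambda>(r,c). - (a1 $ r * b2 $ c))"
  have C: "C \<in> carrier_mat n1 n2" unfolding C_def by simp
  have "N1 *\<^sub>v ((b2 \<bullet> y2) \<cdot>\<^sub>v y1) + C *\<^sub>v y2 = 0\<^sub>v n1"
  proof (rule eq_vecI)
    fix r assume "r < dim_vec (0\<^sub>v n1 :: complex vec)"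
    then have r: "r < n1" by simp
    have "(C *\<^sub>v y2) $ r = - a1 $ r * (b2 \<bullet> y2)"
      using r y2 by (simp add: C_def scalar_prod_def atLeast0LessThan sum_distrib_left sum_negf ac_simps)
    then show "(N1 *\<^sub>v ((b2 \<bullet> y2) \<cdot>\<^sub>v y1) + C *\<^sub>v y2) $ r = 0\<^sub>v n1 $ r"
      using r y1 a1 N1 C mult_mat_vec[OF N1 y1(1)] by (simp add: mult.commute)
  qed (use N1 C in simp)
  then show ?thesis
    using four_block_mat_mult_vec[OF N1 C _ N2, of "0\<^sub>m n2 n1" "(b2 \<bullet> y2) \<cdot>\<^sub>v y1" y2] y1 y2 N2
    unfolding C_def[symmetric] by (simp add: zero_mat_mult_vec)
qed

lemma det_rep_mult:
  assumes f: "det_rep I f n1 N1 a1 b1" and g: "det_rep I g n2 N2 a2 b2"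
  shows "det_rep I (\<lambda>x. f x * g x) (n1 + n2)
     (\<lambda>x. four_block_mat (N1 x) (mat n1 n2 (\<lambda>(r,c). - (a1 $ r * b2 $ c))) (0\<^sub>m n2 n1) (N2 x))
     (0\<^sub>v n1 @\<^sub>v a2) (b1 @\<^sub>v 0\<^sub>v n2)"
  unfolding det_rep_def
proof (intro conjI allI)
  have a: "a1 \<in> carrier_vec n1" "a2 \<in> carrier_vec n2" and b: "b1 \<in> carrier_vec n1" "b2 \<in> carrier_vec n2"
    and N: "\<And>x. N1 x \<in> carrier_mat n1 n1" "\<And>x. N2 x \<in> carrier_mat n2 n2"
    using f g unfolding det_rep_def affine_unimodular_def by auto
  show "affine_unimodular I (n1 + n2) (\<lambda>x. four_block_mat (N1 x) (mat n1 n2 (\<lambda>(r,c). - (a1 $ r * b2 $ c))) (0\<^sub>m n2 n1) (N2 x))"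
    using f g unfolding det_rep_def by (intro affine_unimodular_block) auto
  show "0\<^sub>v n1 @\<^sub>v a2 \<in> carrier_vec (n1 + n2)" "b1 @\<^sub>v 0\<^sub>v n2 \<in> carrier_vec (n1 + n2)"
    using a b by auto
  fix x
  obtain y1 where y1: "y1 \<in> carrier_vec n1" "N1 x *\<^sub>v y1 = a1" "f x = b1 \<bullet> y1"
    using f unfolding det_rep_def by blast
  obtain y2 where y2: "y2 \<in> carrier_vec n2" "N2 x *\<^sub>v y2 = a2" "g x = b2 \<bullet> y2"
    using g unfolding det_rep_def by blast
  have "(b1 @\<^sub>v 0\<^sub>v n2) \<bullet> ((g x \<cdot>\<^sub>v y1) @\<^sub>v y2) = b1 \<bullet> (g x \<cdot>\<^sub>v y1) + 0\<^sub>v n2 \<bullet> y2"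
    by (rule scalar_prod_append[OF b(1) _ _ y2(1)]) (use y1 in auto)
  then have "f x * g x = (b1 @\<^sub>v 0\<^sub>v n2) \<bullet> ((g x \<cdot>\<^sub>v y1) @\<^sub>v y2)"
    using y1 y2 b by simp
  then show "\<exists>y. y \<in> carrier_vec (n1 + n2) \<and>
      four_block_mat (N1 x) (mat n1 n2 (\<lambda>(r,c). - (a1 $ r * b2 $ c))) (0\<^sub>m n2 n1) (N2 x) *\<^sub>v y = 0\<^sub>v n1 @\<^sub>v a2 \<and>
      f x * g x = (b1 @\<^sub>v 0\<^sub>v n2) \<bullet> y"
    using four_block_coupled_mult_vec[OF N(1,2) a(1) y1(1,2) y2(1)] y1 y2
    by (intro exI[of _ "(g x \<cdot>\<^sub>v y1) @\<^sub>v y2"]) auto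
qed

lemma det_rep_exists:
  assumes "finite I" "f \<in> polyfun I"
  shows "\<exists>n N a b. det_rep I f n N a b"
  using assms(2)
proof (induction rule: polyfun.induct)
  case (const c)
  then show ?case using det_rep_const by blast
next
  case (coord i)
  then show ?case using det_rep_coord[OF assms(1)] by blast
next
  case (add f g)
  then show ?case using det_rep_add by blast
next
  case (mult f g)
  then show ?case using det_rep_mult by blast
qed

definition col_mat :: "nat \<Rightarrow> 'a vec \<Rightarrow> 'a mat" where
  "col_mat n a = mat n 1 (\<lambda>(i,_). a $ i)"

definition row_mat :: "nat \<Rightarrow> 'a vec \<Rightarrow> 'a mat" where
  "row_mat n b = mat 1 n (\<lambda>(_,j). b $ j)"

definition border_mat :: "nat \<Rightarrow> 'a :: zero vec \<Rightarrow> 'a vec \<Rightarrow> 'a mat \<Rightarrow> 'a mat" where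
  "border_mat n a b N = four_block_mat (0\<^sub>m 1 1) (row_mat n b) (col_mat n a) N"

lemma row_mat_mult_col_mat:
  assumes "b \<in> carrier_vec n" "y \<in> carrier_vec n"
  shows "row_mat n b * col_mat n y = mat 1 1 (\<lambda>_. b \<bullet> (y :: 'a :: comm_ring_1 vec))"
  using assms by (intro eq_matI) (auto simp: row_mat_def col_mat_def scalar_prod_def row_def col_def)

lemma mult_col_mat:
  assumes "N \<in> carrier_mat n n" "y \<in> carrier_vec n"
  shows "N * col_mat n y = col_mat n (N *\<^sub>v (y :: 'a :: comm_ring_1 vec))"
  using assms by (intro eq_matI) (auto simp: col_mat_def scalar_prod_def col_def)

text \<open>Multiplying on the right by [[-1, 0], [y, 1]] clears the first column below the corner,
  which becomes b \<bullet> y.\<close>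

lemma det_border_mat:
  fixes N :: "complex mat"
  assumes N: "N \<in> carrier_mat n n" and a: "a \<in> carrier_vec n" and b: "b \<in> carrier_vec n"
    and y: "y \<in> carrier_vec n" and Ny: "N *\<^sub>v y = a"
  shows "det (border_mat n a b N) = - (b \<bullet> y) * det N"
proof -
  define E where "E = four_block_mat (mat 1 1 (\<lambda>_. -1)) (0\<^sub>m 1 n) (col_mat n y) (1\<^sub>m n)"
  have R: "row_mat n b \<in> carrier_mat 1 n" and C: "col_mat n a \<in> carrier_mat n 1" "col_mat n y \<in> carrier_mat n 1"
    unfolding row_mat_def col_mat_def by auto
  have K: "border_mat n a b N \<in> carrier_mat (1 + n) (1 + n)"
    unfolding border_mat_def using R C N by (intro four_block_carrier_mat) auto
  have E: "E \<in> carrier_mat (1 + n) (1 + n)"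
    unfolding E_def using C by (intro four_block_carrier_mat) auto
  have corner: "0\<^sub>m 1 1 * mat 1 1 (\<lambda>_. -1) + row_mat n b * col_mat n y = mat 1 1 (\<lambda>_. b \<bullet> y)"
    using row_mat_mult_col_mat[OF b y] by (intro eq_matI) auto
  have lower: "col_mat n a * mat 1 1 (\<lambda>_. -1) + N * col_mat n y = 0\<^sub>m n 1"
    using mult_col_mat[OF N y] Ny a by (intro eq_matI) (auto simp: col_mat_def scalar_prod_def col_def)
  have "border_mat n a b N * E = four_block_mat (0\<^sub>m 1 1 * mat 1 1 (\<lambda>_. -1) + row_mat n b * col_mat n y)
      (0\<^sub>m 1 1 * 0\<^sub>m 1 n + row_mat n b * 1\<^sub>m n) (col_mat n a * mat 1 1 (\<lambda>_. -1) + N * col_mat n y)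
      (col_mat n a * 0\<^sub>m 1 n + N * 1\<^sub>m n)"
    unfolding border_mat_def E_def by (rule mult_four_block_mat[OF _ R C(1) N _ _ C(2)]) auto
  also have "\<dots> = four_block_mat (mat 1 1 (\<lambda>_. b \<bullet> y)) (row_mat n b) (0\<^sub>m n 1) N"
    unfolding corner lower using R C N by simp
  finally have "det (border_mat n a b N * E) = (b \<bullet> y) * det N"
    using det_four_block_mat_lower_left_zero[OF _ R refl N] by (simp add: det_single)
  moreover have "det E = -1" unfolding E_def
    by (subst det_four_block_mat_upper_right_zero[OF _ refl C(2)]) (auto simp: det_single)
  ultimately have "- det (border_mat n a b N) = (b \<bullet> y) * det N"
    using det_mult[OF K E] by simp
  then show ?thesis by (metis minus_minus mult_minus_left)
qed

definition sym_block :: "nat \<Rightarrow> 'a :: zero mat \<Rightarrow> 'a mat" where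
  "sym_block n B = four_block_mat (0\<^sub>m n n) B (transpose_mat B) (0\<^sub>m n n)"

lemma sym_block_carrier: "B \<in> carrier_mat n n \<Longrightarrow> sym_block n B \<in> carrier_mat (n + n) (n + n)"
  unfolding sym_block_def by (intro four_block_carrier_mat) auto

lemma sym_block_index:
  assumes "B \<in> carrier_mat n n" "r < n + n" "c < n + n"
  shows "sym_block n B $$ (r,c) = (if r < n then if c < n then 0 else B $$ (r, c - n)
    else if c < n then B $$ (c, r - n) else 0)"
  unfolding sym_block_def using assms by auto

lemma det_sym_block:
  fixes B :: "'a :: idom mat"
  assumes B: "B \<in> carrier_mat n n"
  shows "det (sym_block n B) = (-1) ^ n * (det B)\<^sup>2"
proof -
  have Bt: "transpose_mat B \<in> carrier_mat n n" using B by simp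
  have "det (sym_block n B) = det (0\<^sub>m n n * 0\<^sub>m n n - B * transpose_mat B)"
    unfolding sym_block_def by (rule det_four_block_mat[OF _ B Bt]) (use Bt in auto)
  also have "0\<^sub>m n n * 0\<^sub>m n n - B * transpose_mat B = (-1) \<cdot>\<^sub>m (B * transpose_mat B)"
    by (rule eq_matI) (use B Bt in auto)
  also have "det \<dots> = (-1) ^ n * (det B * det (transpose_mat B))"
    using B Bt by (simp add: det_mult[OF B Bt])
  finally show ?thesis by (simp add: det_transpose[OF B] power2_eq_square)
qed

definition sym_coords :: "nat \<Rightarrow> complex mat \<Rightarrow> (nat \<times> nat \<Rightarrow> complex)" where
  "sym_coords m S = (\<lambda>q. if q \<in> symidx m then S $$ q else 0)"

lemma symmat_sym_coords:
  assumes S: "S \<in> carrier_mat m m" and sym: "\<And>r c. r < m \<Longrightarrow> c < m \<Longrightarrow> S $$ (r,c) = S $$ (c,r)"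
  shows "symmat m (sym_coords m S) = S"
proof (rule eq_matI)
  fix i j assume "i < dim_row S" "j < dim_col S"
  then have ij: "i < m" "j < m" using S by auto
  then have "(min i j, max i j) \<in> symidx m" by (auto simp: symidx_def)
  then show "symmat m (sym_coords m S) $$ (i,j) = S $$ (i,j)"
    using ij sym[of i j] by (auto simp: symmat_def sym_coords_def min_def max_def)
qed (use S in \<open>simp_all add: symmat_def\<close>)

lemma sym_coords_cspace: "sym_coords m S \<in> cspace (symidx m)"
  unfolding sym_coords_def cspace_def by auto

text \<open>The block [[1, x (e 0), ..., x (e (k-1))], [0, 1]] does not change a determinant but makes
  every coordinate an entry, which is what makes the final embedding injective.\<close>

definition coord_block :: "nat \<Rightarrow> (nat \<Rightarrow> 'i) \<Rightarrow> ('i \<Rightarrow> complex) \<Rightarrow> complex mat" where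
  "coord_block k e x = mat (k + 1) (k + 1) (\<lambda>(r,c). if r = c then 1 else if r = 0 \<and> 0 < c then x (e (c - 1)) else 0)"

lemma coord_block_carrier: "coord_block k e x \<in> carrier_mat (k + 1) (k + 1)"
  unfolding coord_block_def by simp

lemma det_coord_block: "det (coord_block k e x) = 1"
  by (rule det_unit_upper_triangular[OF coord_block_carrier]) (auto simp: coord_block_def)

lemma coord_block_aff:
  assumes "finite I" "e ` {0..<k} \<subseteq> I" "r < k + 1" "c < k + 1"
  shows "aff I (\<lambda>x. coord_block k e x $$ (r,c))"
proof -
  have "aff I (\<lambda>x. if r = c then 1 else if r = 0 \<and> 0 < c then x (e (c - 1)) else 0)"
    using assms by (intro aff_if aff_const aff_coord[OF assms(1), of _ 1, simplified]) auto
  then show ?thesis unfolding coord_block_def using assms(3,4) by simp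
qed

lemma coord_block_index: "j < k \<Longrightarrow> coord_block k e x $$ (0, Suc j) = x (e j)"
  unfolding coord_block_def by simp

lemma affine_det_pencil_exists:
  assumes fin: "finite I" and F: "F \<in> polyfun I"
  obtains n B p where "\<And>x. B x \<in> carrier_mat n n" "\<And>x. det (B x) = - F x"
    "\<And>r c. r < n \<Longrightarrow> c < n \<Longrightarrow> aff I (\<lambda>x. B x $$ (r,c))"
    "\<And>i. i \<in> I \<Longrightarrow> fst (p i) < n \<and> snd (p i) < n"
    "\<And>x i. i \<in> I \<Longrightarrow> B x $$ p i = x i"
proof -
  obtain n N a b where rep: "det_rep I F n N a b" using det_rep_exists[OF fin F] by blast
  then have a: "a \<in> carrier_vec n" and b: "b \<in> carrier_vec n" and N: "\<And>x. N x \<in> carrier_mat n n"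
    and N_aff: "\<And>r c. r < n \<Longrightarrow> c < n \<Longrightarrow> aff I (\<lambda>x. N x $$ (r,c))"
    unfolding det_rep_def affine_unimodular_def by auto
  define k where "k = card I"
  obtain e where e: "bij_betw e {0..<k} I" using ex_bij_betw_nat_finite[OF fin] unfolding k_def by blast
  define K where "K x = border_mat n a b (N x)" for x
  define B where "B x = four_block_mat (K x) (0\<^sub>m (1 + n) (k + 1)) (0\<^sub>m (k + 1) (1 + n)) (coord_block k e x)" for x
  define p where "p i = (1 + n, (1 + n) + (the_inv_into {0..<k} e i + 1))" for i
  have K: "K x \<in> carrier_mat (1 + n) (1 + n)" for x
    unfolding K_def border_mat_def row_mat_def col_mat_def using N by (intro four_block_carrier_mat) auto
  show thesis
  proof
    show "B x \<in> carrier_mat ((1 + n) + (k + 1)) ((1 + n) + (k + 1))" for x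
      unfolding B_def using K coord_block_carrier by (intro four_block_carrier_mat) auto
    show "det (B x) = - F x" for x
    proof -
      obtain y where y: "y \<in> carrier_vec n" "N x *\<^sub>v y = a" "F x = b \<bullet> y"
        using rep unfolding det_rep_def by blast
      have "det (K x) = - F x"
        using det_border_mat[OF N a b y(1,2)] rep y(3) unfolding K_def det_rep_def affine_unimodular_def by simp
      then show ?thesis unfolding B_def
        by (subst det_four_block_mat_upper_right_zero[OF K refl _ coord_block_carrier]) (auto simp: det_coord_block)
    qed
    show "aff I (\<lambda>x. B x $$ (r,c))" if "r < (1 + n) + (k + 1)" "c < (1 + n) + (k + 1)" for r c
    proof -
      have "aff I (\<lambda>x. K x $$ (r,c))" if "r < 1 + n" "c < 1 + n" for r c
        unfolding K_def border_mat_def four_block_mat_index[OF zero_carrier_mat N that]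
        by (intro aff_if N_aff aff_const) (use that in \<open>auto simp: row_mat_def col_mat_def\<close>)
      moreover have "e ` {0..<k} \<subseteq> I" using e unfolding bij_betw_def by blast
      ultimately show ?thesis
        unfolding B_def four_block_mat_index[OF K coord_block_carrier that]
        by (intro aff_if aff_const coord_block_aff[OF fin]) (use that in auto)
    qed
    fix i assume i: "i \<in> I"
    define j where "j = the_inv_into {0..<k} e i"
    have j: "j < k" "e j = i" using e i unfolding j_def
      by (auto simp: bij_betw_def the_inv_into_f_f f_the_inv_into_f)
    show "fst (p i) < (1 + n) + (k + 1) \<and> snd (p i) < (1 + n) + (k + 1)"
      unfolding p_def j_def[symmetric] using j by simp
    show "B x $$ p i = x i" for x
      unfolding p_def j_def[symmetric] B_def using K[of x] coord_block_carrier[of k e x] j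
      by (simp add: coord_block_index)
  qed
qed

section \<open>Embedding into symmetric matrices\<close>

lemma ml_embedding_exists:
  assumes fin: "finite I" and F: "F \<in> polyfun I"
  shows "\<exists>m A b M pos c. ml_embedding I (symidx m) A b M pos F (detF m) c"
proof -
  obtain n B p where B: "\<And>x. B x \<in> carrier_mat n n" and det_B: "\<And>x. det (B x) = - F x"
    and B_aff: "\<And>r c. r < n \<Longrightarrow> c < n \<Longrightarrow> aff I (\<lambda>x. B x $$ (r,c))"
    and p: "\<And>i. i \<in> I \<Longrightarrow> fst (p i) < n \<and> snd (p i) < n"
    and B_p: "\<And>x i. i \<in> I \<Longrightarrow> B x $$ p i = x i"
    by (rule affine_det_pencil_exists[OF fin F]) (rule that)
  define m where "m = n + n"
  define A where "A x = sym_coords m (sym_block n (B x))" for x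
  define pos where "pos i = (fst (p i), n + snd (p i))" for i
  have S_index: "sym_block n (B x) $$ (r,c) = (if r < n then if c < n then 0 else B x $$ (r, c - n)
      else if c < n then B x $$ (c, r - n) else 0)" if "r < m" "c < m" for x r c
    using sym_block_index[OF B] that by (simp add: m_def)
  have "aff I (\<lambda>x. A x q)" for q
  proof (cases "q \<in> symidx m")
    case True
    then obtain r c where "q = (r,c)" "r < m" "c < m" by (cases q) (auto simp: symidx_def)
    then show ?thesis
      unfolding A_def sym_coords_def using True
      by (simp add: S_index) (intro aff_if aff_const B_aff; simp add: m_def)
  qed (simp add: A_def sym_coords_def aff_const)
  then obtain b M where A_eq: "\<And>x. A x = (\<lambda>q. b q + (\<Sum>i\<in>I. M q i * x i))"
    using aff_choice by metis
  have symmat_A: "symmat m (A x) = sym_block n (B x)" for x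
    unfolding A_def m_def using sym_block_carrier[OF B] sym_block_index[OF B]
    by (intro symmat_sym_coords) auto
  have pos: "pos i \<in> symidx m" if "i \<in> I" for i
    using p[OF that] by (auto simp: pos_def symidx_def m_def)
  have "ml_embedding I (symidx m) A b M pos F (detF m) ((-1) ^ n)"
  proof
    show "finite I" "finite (symidx m)" "F \<in> polyfun I" "(-1) ^ n \<noteq> (0 :: complex)"
      using fin finite_symidx F by auto
    show "A x = (\<lambda>k. b k + (\<Sum>i\<in>I. M k i * x i))" for x by (rule A_eq)
    show "A x \<in> cspace (symidx m)" for x unfolding A_def by (rule sym_coords_cspace)
    show "pos i \<in> symidx m" if "i \<in> I" for i using pos[OF that] .
    show "A x (pos i) = x i" if "i \<in> I" for x i
      using p[OF that] B_p[OF that] pos[OF that]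
      by (auto simp: A_def sym_coords_def pos_def S_index m_def)
    show "detF m (A x) = (-1) ^ n * (F x)\<^sup>2" for x
      unfolding detF_def symmat_A det_sym_block[OF B] det_B by simp
  qed
  then show ?thesis by blast
qed

theorem proposition2p3:
  shows "(\<forall>m X. irreducible_variety (symidx m) X \<longrightarrow>
            MLD (symidx m) (detF m) X = gaussian_MLD m X)
       \<and> (\<forall>(I :: 'i set) X F. finite I \<and> irreducible_variety I X \<and> F \<in> polyfun I \<longrightarrow>
            (\<exists>m A b M. A ` cspace I \<subseteq> cspace (symidx m) \<and>
               (\<forall>x\<in>cspace I. A x = (\<lambda>k. b k + (\<Sum>i\<in>I. M k i * x i))) \<and>
               inj_on A (cspace I) \<and>
               MLD I F X = MLD (symidx m) (detF m) (A ` X)))"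
proof (intro conjI allI impI)
  show "MLD (symidx m) (detF m) X = gaussian_MLD m X" for m X
    by (rule MLD_detF_eq_gaussian_MLD)
next
  fix I :: "'i set" and X F
  assume H: "finite I \<and> irreducible_variety I X \<and> F \<in> polyfun I"
  then obtain m A b M pos c where "ml_embedding I (symidx m) A b M pos F (detF m) c"
    using ml_embedding_exists by blast
  then interpret ml_embedding I "symidx m" A b M pos F "detF m" c .
  have X: "X \<subseteq> cspace I"
    using H affine_variety_subset unfolding irreducible_variety_def by blast
  show "\<exists>m A b M. A ` cspace I \<subseteq> cspace (symidx m) \<and>
      (\<forall>x\<in>cspace I. A x = (\<lambda>k. b k + (\<Sum>i\<in>I. M k i * x i))) \<and>
      inj_on A (cspace I) \<and> MLD I F X = MLD (symidx m) (detF m) (A ` X)"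
  proof (intro exI conjI)
    show "A ` cspace I \<subseteq> cspace (symidx m)" using A_cspace by blast
    show "\<forall>x\<in>cspace I. A x = (\<lambda>k. b k + (\<Sum>i\<in>I. M k i * x i))" using A_eq by blast
    show "inj_on A (cspace I)" by (rule inj_on_A)
    show "MLD I F X = MLD (symidx m) (detF m) (A ` X)" using MLD_image[OF X] by simp
  qed
qed

end
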